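(* Write $\log\mathbb{E}[z^B]=\sum_{k\ge0}q_kz^k$ for the Taylor expansion around $z=0$. Then $$q_0=\frac{N\mu}{\gamma}\left[\frac1N\,{}_2F_1\!\left(1,\gamma;1+\gamma;N^{-1/\gamma}q\right)-{}_2F_1\!\left(1,\gamma;1+\gamma;q\right)\right],$$ and for $k\ge1$ $$q_k=\mu\sum_{j=1}^{k}\binom{k-1}{j-1}\frac{1}{j+\gamma}\left(\frac{1-q}{q-N^{1/\gamma}}\right)^{j}{}_2F_1\!\left(1,\gamma;1+\gamma+j;N^{-1/\gamma}q\right)+N\mu\,\frac{(k-1)!}{(\gamma+1)_k}\,{}_2F_1\!\left(k,\gamma;1+\gamma+k;q\right).$$ Consequently the probabilities $p_n=\mathbb{P}(B=n)$ satisfy $p_0=e^{q_0}$ and $p_n=\frac1n\sum_{k=0}^{n-1}(n-k)\,q_{n-k}\,p_k$ for $n\ge1$.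
   Context: Model: fix $\delta>0$, $\nu>0$ and $\alpha>\beta\ge 0$, and put $\lambda=\alpha-\beta>0$. The wild-type population is deterministic, of size $e^{\delta t}$ at time $t\ge0$. Mutants arise at the points of an inhomogeneous Poisson process on $[0,\infty)$ with intensity $\nu e^{\delta t}$. Each mutant arising at time $s$ founds a clone that evolves as a linear birth–death process started from one cell, with per-capita birth rate $\alpha$ and death rate $\beta$. Clones are independent of each other and of the Poisson process. For $N>1$ let $\tau=\log N/\delta$, and let $B$ be the total number of mutant cells alive at time $\tau$. Notation: $q=\beta/\alpha\in[0,1)$, $\gamma=\delta/\lambda$, $\mu=\nu/\alpha$. ${}_2F_1(a,b;c;x)=\sum_{n\ge0}\frac{(a)_n(b)_n}{(c)_n}\frac{x^n}{n!}$ is the Gauss hypergeometric function, and $(a)_n=\Gamma(a+n)/\Gamma(a)$ is the Pochhammer symbol. *)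

theory Defs
  imports "HOL-Analysis.Analysis"
begin

definition hyp2F1 :: "real \<Rightarrow> real \<Rightarrow> real \<Rightarrow> real \<Rightarrow> real" where
  "hyp2F1 a b c x =
     (\<Sum>n. pochhammer a n * pochhammer b n / pochhammer c n * x ^ n / fact n)"

text \<open>Law of a linear birth-death process (birth rate al, death rate be, al > be >= 0)
  started from one cell, observed at age t >= 0 (Kendall's explicit solution):
  P(X_t = 0) = xi(t), P(X_t = n) = (1 - xi(t)) (1 - eta(t)) eta(t)^(n-1) for n >= 1.\<close>
definition bd_xi :: "real \<Rightarrow> real \<Rightarrow> real \<Rightarrow> real" where
  "bd_xi al be t = be * (exp ((al - be) * t) - 1) / (al * exp ((al - be) * t) - be)"

definition bd_eta :: "real \<Rightarrow> real \<Rightarrow> real \<Rightarrow> real" where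
  "bd_eta al be t = al * (exp ((al - be) * t) - 1) / (al * exp ((al - be) * t) - be)"

definition bd_pmf :: "real \<Rightarrow> real \<Rightarrow> real \<Rightarrow> nat \<Rightarrow> real" where
  "bd_pmf al be t n =
     (if n = 0 then bd_xi al be t
      else (1 - bd_xi al be t) * (1 - bd_eta al be t) * bd_eta al be t ^ (n - 1))"

text \<open>Total Poisson intensity of mutations on [0,T]: integral of nu e^(de s).\<close>
definition mut_mass :: "real \<Rightarrow> real \<Rightarrow> real \<Rightarrow> real" where
  "mut_mass de nu T = integral {0..T} (\<lambda>s. nu * exp (de * s))"

text \<open>Law of the size at time T of a single clone founded at a time distributed with
  density proportional to nu e^(de s) on [0,T] (the law of one Poisson point).\<close>
definition clone_pmf :: "real \<Rightarrow> real \<Rightarrow> real \<Rightarrow> real \<Rightarrow> real \<Rightarrow> nat \<Rightarrow> real" where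
  "clone_pmf de nu al be T n =
     integral {0..T} (\<lambda>s. nu * exp (de * s) * bd_pmf al be (T - s) n) / mut_mass de nu T"

fun conv_pow :: "(nat \<Rightarrow> real) \<Rightarrow> nat \<Rightarrow> nat \<Rightarrow> real" where
  "conv_pow c 0 n = (if n = 0 then 1 else 0)"
| "conv_pow c (Suc m) n = (\<Sum>k\<le>n. c k * conv_pow c m (n - k))"

text \<open>Law of B = total number of mutant cells at time T: the number of mutants is
  Poisson(mut_mass), and given it, the clone sizes are i.i.d. with law clone_pmf
  (Poisson point process with independent marks).\<close>
definition B_pmf :: "real \<Rightarrow> real \<Rightarrow> real \<Rightarrow> real \<Rightarrow> real \<Rightarrow> nat \<Rightarrow> real" where
  "B_pmf de nu al be T n =
     (\<Sum>m. exp (- mut_mass de nu T) * mut_mass de nu T ^ m / fact m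
            * conv_pow (clone_pmf de nu al be T) m n)"

end

theory Submission
  imports Defs
begin

(* B is compound Poisson: the number of clones is Poisson with mean M = mut_mass, and their
   sizes are i.i.d. with law c = clone_pmf.  Hence E[z^B] = exp (M (C z - 1)) for the generating
   function C of c, so log E[z^B] has coefficients q_k = M (c_k - [k = 0]), and comparing
   coefficients in the derivative of the exponential gives n p_n = sum (n - k) q_(n-k) p_k.

   It remains to compute M c_k - M [k = 0], the integral over [0, tau] of
   nu e^(delta s) (P(X_(tau-s) = k) - [k = 0]).  In the age t = tau - s, Kendall's formula makes
   the integrand a rational function of E = e^(lam t) times e^(-delta t).  Writing
   E - 1 = (E - q) - (1 - q) and expanding binomially reduces it to terms
   e^(-gamma lam t) E / (E - q)^(j+1), each of which has the primitive
   - e^(-gamma lam t) (E - q)^(-j) 2F1(1, gamma; 1 + gamma + j; q / E) / (lam (j + gamma))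
   by the first-order ODE satisfied by 2F1(1, b; c; y).  At age 0 the sum over j collapses, by a
   finite-difference identity for 1 / (x)_n, to the single term 2F1(k, gamma; 1 + gamma + k; q). *)

section \<open>Compound Poisson distributions\<close>

definition poisson_weight :: "real \<Rightarrow> nat \<Rightarrow> real" where
  "poisson_weight M m = exp (- M) * M ^ m / fact m"

definition compound_poisson :: "real \<Rightarrow> real fps \<Rightarrow> nat \<Rightarrow> real" where
  "compound_poisson M C n = (\<Sum>m. poisson_weight M m * fps_nth (C ^ m) n)"

lemma conv_pow_eq_fps_nth: "conv_pow c m n = fps_nth (Abs_fps c ^ m) n"
proof (induction m arbitrary: n)
  case (Suc m)
  then show ?case by (simp add: fps_mult_nth atLeast0AtMost)
qed simp

lemma B_pmf_eq_compound_poisson: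
  "B_pmf \<delta> \<nu> \<alpha> \<beta> T = compound_poisson (mut_mass \<delta> \<nu> T) (Abs_fps (clone_pmf \<delta> \<nu> \<alpha> \<beta> T))"
  by (simp add: B_pmf_def compound_poisson_def poisson_weight_def conv_pow_eq_fps_nth fun_eq_iff)

lemma poisson_weight_nonneg: "0 \<le> M \<Longrightarrow> 0 \<le> poisson_weight M m"
  by (simp add: poisson_weight_def)

lemma poisson_weight_Suc: "real (Suc m) * poisson_weight M (Suc m) = M * poisson_weight M m"
  by (simp add: poisson_weight_def field_simps del: of_nat_Suc)

lemma poisson_weight_sums: "(\<lambda>m. poisson_weight M m * x ^ m) sums exp (M * (x - 1))"
proof -
  have "(\<lambda>m. exp (- M) * ((M * x) ^ m /\<^sub>R fact m)) sums (exp (- M) * exp (M * x))"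
    by (rule sums_mult[OF exp_converges])
  moreover have "exp (- M) * exp (M * x) = exp (M * (x - 1))"
    by (simp add: exp_add[symmetric] algebra_simps)
  ultimately show ?thesis by (simp add: poisson_weight_def power_mult_distrib divide_inverse mult_ac)
qed

lemma fps_power_Suc_deriv_nth:
  fixes C :: "real fps"
  shows "real (Suc n) * fps_nth (C ^ Suc m) (Suc n)
    = real (Suc m) * (\<Sum>i\<le>n. fps_nth (C ^ m) i * (real (Suc n - i) * fps_nth C (Suc n - i)))"
proof -
  have "real (Suc n) * fps_nth (C ^ Suc m) (Suc n) = fps_nth (fps_deriv (C ^ Suc m)) n"
    by (simp only: fps_deriv_nth Suc_eq_plus1)
  also have "fps_deriv (C ^ Suc m) = of_nat (Suc m) * (C ^ m * fps_deriv C)"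
    by (subst fps_deriv_power') (simp only: diff_Suc_1 mult_ac)
  also have "fps_nth \<dots> n = real (Suc m) * fps_nth (C ^ m * fps_deriv C) n"
    by (simp add: fps_of_nat[symmetric] del: of_nat_Suc)
  also have "fps_nth (C ^ m * fps_deriv C) n
      = (\<Sum>i\<le>n. fps_nth (C ^ m) i * (real (Suc n - i) * fps_nth C (Suc n - i)))"
    by (auto simp: fps_mult_nth atLeast0AtMost Suc_diff_le intro!: sum.cong)
  finally show ?thesis .
qed

lemma fps_power_nth_nonneg:
  fixes C :: "real fps"
  assumes "\<And>n. 0 \<le> fps_nth C n"
  shows "0 \<le> fps_nth (C ^ m) n"
proof (induction m arbitrary: n)
  case (Suc m)
  then show ?case by (auto simp: fps_mult_nth intro!: sum_nonneg mult_nonneg_nonneg assms)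
qed simp

lemma sums_eval_fps_power:
  fixes C :: "real fps"
  assumes "norm z < fps_conv_radius C"
  shows "(\<lambda>n. fps_nth (C ^ m) n * z ^ n) sums eval_fps C z ^ m"
proof -
  have "norm z < fps_conv_radius (C ^ m)"
    using assms fps_conv_radius_power[of C m] by (rule less_le_trans)
  then show ?thesis using sums_eval_fps eval_fps_power[OF assms] by metis
qed

lemma fps_power_nth_le:
  fixes C :: "real fps"
  assumes nonneg: "\<And>n. 0 \<le> fps_nth C n" and r: "0 < r" "r < fps_conv_radius C"
  shows "fps_nth (C ^ m) n \<le> eval_fps C r ^ m / r ^ n"
proof -
  note s = sums_eval_fps_power[of r C m]
  have "fps_nth (C ^ m) n * r ^ n \<le> eval_fps C r ^ m"
    using sum_le_suminf[OF sums_summable[OF s], of "{n}"] sums_unique[OF s] r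
      fps_power_nth_nonneg[OF nonneg] by simp
  then show ?thesis using r by (simp add: field_simps)
qed

lemma fps_conv_radius_ge_1:
  fixes C :: "real fps"
  assumes "\<And>n. \<bar>fps_nth C n\<bar> \<le> 1"
  shows "1 \<le> fps_conv_radius C"
  unfolding fps_conv_radius_def
proof (rule conv_radius_geI_ex')
  fix r :: real assume r: "0 < r" "ereal r < 1"
  show "summable (\<lambda>n. fps_nth C n * of_real r ^ n)"
  proof (rule summable_comparison_test[of _ "\<lambda>n. r ^ n"])
    show "summable (\<lambda>n. r ^ n)" using r by (intro summable_geometric) (simp add: one_ereal_def)
    have "norm (fps_nth C n * of_real r ^ n) \<le> r ^ n" for n
    proof -
      have "norm (fps_nth C n * of_real r ^ n) = \<bar>fps_nth C n\<bar> * r ^ n"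
        using r by (simp add: abs_mult)
      also have "\<dots> \<le> r ^ n" using assms[of n] r by (intro mult_left_le_one_le) auto
      finally show ?thesis .
    qed
    then show "\<exists>N. \<forall>n\<ge>N. norm (fps_nth C n * of_real r ^ n) \<le> r ^ n" by blast
  qed
qed

context
  fixes M :: real and C :: "real fps"
  assumes M: "0 \<le> M" and nonneg: "\<And>n. 0 \<le> fps_nth C n" and radius: "0 < fps_conv_radius C"
begin

lemma compound_poisson_sums: "(\<lambda>m. poisson_weight M m * fps_nth (C ^ m) n) sums compound_poisson M C n"
proof -
  obtain r :: real where r: "0 < r" "r < fps_conv_radius C"
    using ereal_dense2[OF radius] by (auto simp: zero_ereal_def)
  have "summable (\<lambda>m. poisson_weight M m * (eval_fps C r ^ m / r ^ n))"
    using summable_divide[OF sums_summable[OF poisson_weight_sums[of M "eval_fps C r"]], of "r ^ n"]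
    by simp
  moreover have "norm (poisson_weight M m * fps_nth (C ^ m) n)
      \<le> poisson_weight M m * (eval_fps C r ^ m / r ^ n)" for m
    using mult_left_mono[OF fps_power_nth_le[OF nonneg r] poisson_weight_nonneg[OF M]]
      fps_power_nth_nonneg[OF nonneg] poisson_weight_nonneg[OF M] by simp
  ultimately have "summable (\<lambda>m. poisson_weight M m * fps_nth (C ^ m) n)"
    by (rule summable_comparison_test')
  then show ?thesis unfolding compound_poisson_def by (rule summable_sums)
qed

lemma compound_poisson_0: "compound_poisson M C 0 = exp (M * (fps_nth C 0 - 1))"
proof -
  have "(\<lambda>m. poisson_weight M m * fps_nth C 0 ^ m) sums compound_poisson M C 0"
    using compound_poisson_sums[of 0] by (simp add: fps_nth_power_0)
  then show ?thesis using poisson_weight_sums sums_unique2 by blast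
qed

lemma compound_poisson_recursion:
  "real n * compound_poisson M C n
    = (\<Sum>k<n. real (n - k) * (M * fps_nth C (n - k)) * compound_poisson M C k)"
proof (cases n)
  case (Suc n')
  define a where "a k = real (Suc n' - k) * (M * fps_nth C (Suc n' - k))" for k
  define s where "s m = real (Suc n') * (poisson_weight M m * fps_nth (C ^ m) (Suc n'))" for m
  have "(\<lambda>m. \<Sum>k\<le>n'. a k * (poisson_weight M m * fps_nth (C ^ m) k))
      sums (\<Sum>k\<le>n'. a k * compound_poisson M C k)"
    using compound_poisson_sums by (intro sums_sum sums_mult)
  moreover have "(\<Sum>k\<le>n'. a k * (poisson_weight M m * fps_nth (C ^ m) k)) = s (Suc m)" for m
  proof -
    have "s (Suc m) = poisson_weight M (Suc m) * (real (Suc n') * fps_nth (C ^ Suc m) (Suc n'))"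
      by (simp add: s_def mult_ac)
    also have "\<dots> = real (Suc m) * poisson_weight M (Suc m)
        * (\<Sum>i\<le>n'. fps_nth (C ^ m) i * (real (Suc n' - i) * fps_nth C (Suc n' - i)))"
      unfolding fps_power_Suc_deriv_nth by (simp add: mult_ac)
    finally show ?thesis
      unfolding poisson_weight_Suc by (simp add: a_def sum_distrib_left mult_ac)
  qed
  ultimately have "(\<lambda>m. s (Suc m)) sums (\<Sum>k\<le>n'. a k * compound_poisson M C k)"
    by simp
  then have "s sums (\<Sum>k\<le>n'. a k * compound_poisson M C k)"
    using sums_Suc_iff[of s] by (simp add: s_def)
  moreover have "s sums (real (Suc n') * compound_poisson M C (Suc n'))"
    unfolding s_def using compound_poisson_sums by (intro sums_mult)
  ultimately have "(\<Sum>k\<le>n'. a k * compound_poisson M C k) = real (Suc n') * compound_poisson M C (Suc n')"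
    by (rule sums_unique2)
  then show ?thesis unfolding Suc lessThan_Suc_atMost a_def by simp
qed simp

lemma compound_poisson_has_sum_Sigma:
  assumes z: "norm z < fps_conv_radius C"
  shows "((\<lambda>(m, n). poisson_weight M m * fps_nth (C ^ m) n * z ^ n) has_sum exp (M * (eval_fps C z - 1)))
    (UNIV \<times> UNIV)"
proof -
  define f where "f = (\<lambda>(m, n). poisson_weight M m * fps_nth (C ^ m) n * z ^ n)"
  have "norm \<bar>z\<bar> < fps_conv_radius C" using z by simp
  from sums_mult[OF sums_eval_fps_power[OF this]]
  have rows_norm: "((\<lambda>n. norm (f (m, n))) has_sum poisson_weight M m * eval_fps C \<bar>z\<bar> ^ m) UNIV" for m
    using poisson_weight_nonneg[OF M] fps_power_nth_nonneg[OF nonneg]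
    by (intro sums_nonneg_imp_has_sum) (simp_all add: f_def abs_mult power_abs mult.assoc)
  have rows: "((\<lambda>n. f (m, n)) has_sum poisson_weight M m * eval_fps C z ^ m) UNIV" for m
  proof (rule norm_summable_imp_has_sum)
    show "summable (\<lambda>n. norm (f (m, n)))" using has_sum_imp_sums[OF rows_norm] by (rule sums_summable)
    show "(\<lambda>n. f (m, n)) sums (poisson_weight M m * eval_fps C z ^ m)"
      unfolding f_def mult.assoc by (simp add: sums_mult[OF sums_eval_fps_power[OF z]])
  qed
  have "(\<lambda>m. poisson_weight M m * eval_fps C \<bar>z\<bar> ^ m) summable_on UNIV"
    using sums_summable[OF poisson_weight_sums]
    by (rule summable_nonneg_imp_summable_on) (rule has_sum_nonneg[OF rows_norm], simp)
  then have "(\<lambda>x. norm (f x)) summable_on UNIV \<times> UNIV"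
    using rows_norm by (intro summable_on_SigmaI) auto
  then have "f summable_on UNIV \<times> UNIV" by (rule abs_summable_summable)
  then have f_sum: "(f has_sum infsum f (UNIV \<times> UNIV)) (UNIV \<times> UNIV)" by (rule has_sum_infsum)
  then have "((\<lambda>m. poisson_weight M m * eval_fps C z ^ m) has_sum infsum f (UNIV \<times> UNIV)) UNIV"
    using rows by (rule has_sum_SigmaD)
  with poisson_weight_sums have "infsum f (UNIV \<times> UNIV) = exp (M * (eval_fps C z - 1))"
    using has_sum_imp_sums sums_unique2 by blast
  with f_sum show ?thesis unfolding f_def by simp
qed

lemma compound_poisson_sums_exp:
  assumes z: "norm z < fps_conv_radius C"
  shows "(\<lambda>n. compound_poisson M C n * z ^ n) sums exp (M * (eval_fps C z - 1))"
proof -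
  have "((\<lambda>m. poisson_weight M m * fps_nth (C ^ m) n * z ^ n) has_sum compound_poisson M C n * z ^ n) UNIV"
    for n
    using compound_poisson_sums[of n] poisson_weight_nonneg[OF M] fps_power_nth_nonneg[OF nonneg]
    by (intro has_sum_cmult_left sums_nonneg_imp_has_sum) auto
  then have "((\<lambda>n. compound_poisson M C n * z ^ n) has_sum exp (M * (eval_fps C z - 1))) UNIV"
    by (intro has_sum_SigmaD[OF has_sum_swap[THEN iffD1, OF compound_poisson_has_sum_Sigma[OF z]]]) simp
  then show ?thesis by (rule has_sum_imp_sums)
qed

lemma compound_poisson_ln_sums:
  assumes "norm z < fps_conv_radius C"
  shows "(\<lambda>k. M * (fps_nth C k - of_bool (k = 0)) * z ^ k)
    sums ln (\<Sum>n. compound_poisson M C n * z ^ n)"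
proof -
  have "(\<lambda>k. of_bool (k = 0) * z ^ k) = (\<lambda>k. if k = 0 then 1 else 0)" by auto
  then have "(\<lambda>k. of_bool (k = 0) * z ^ k) sums 1" using sums_single[of 0 "\<lambda>_. 1"] by simp
  from sums_diff[OF sums_mult[OF sums_eval_fps[OF assms]] sums_mult[OF this]]
  have "(\<lambda>k. M * (fps_nth C k - of_bool (k = 0)) * z ^ k) sums (M * (eval_fps C z - 1))"
    by (simp add: algebra_simps)
  moreover have "(\<Sum>n. compound_poisson M C n * z ^ n) = exp (M * (eval_fps C z - 1))"
    using compound_poisson_sums_exp[OF assms] by (rule sums_unique[symmetric])
  ultimately show ?thesis by simp
qed

end

lemma compound_poisson_log_pgf:
  fixes M :: real and c Q :: "nat \<Rightarrow> real"
  assumes M: "0 \<le> M" and c: "\<And>n. 0 \<le> c n" "\<And>n. c n \<le> 1"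
    and Q: "\<And>k. Q k = M * (c k - of_bool (k = 0))"
  defines "p \<equiv> compound_poisson M (Abs_fps c)"
  shows "(\<exists>r>0. \<forall>z::real. \<bar>z\<bar> < r \<longrightarrow> (\<lambda>k. Q k * z ^ k) sums ln (\<Sum>n. p n * z ^ n))
         \<and> p 0 = exp (Q 0)
         \<and> (\<forall>n\<ge>1. p n = 1 / real n * (\<Sum>k<n. real (n - k) * Q (n - k) * p k))"
proof -
  have radius: "1 \<le> fps_conv_radius (Abs_fps c)"
    using c by (intro fps_conv_radius_ge_1) simp
  have C: "\<And>n. 0 \<le> fps_nth (Abs_fps c) n" "0 < fps_conv_radius (Abs_fps c)"
    using c(1) less_le_trans[OF _ radius, of 0] by simp_all
  have "(\<lambda>k. Q k * z ^ k) sums ln (\<Sum>n. p n * z ^ n)" if "\<bar>z\<bar> < 1" for z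
  proof -
    have "ereal (norm z) < 1" using that by (simp add: one_ereal_def)
    from compound_poisson_ln_sums[OF M C less_le_trans[OF this radius]] show ?thesis
      by (simp add: p_def Q)
  qed
  moreover have "real n * p n = (\<Sum>k<n. real (n - k) * Q (n - k) * p k)" for n
    using compound_poisson_recursion[OF M C, of n] by (simp add: p_def Q)
  ultimately show ?thesis
    using compound_poisson_0[OF M C] by (auto simp: p_def Q field_simps intro!: exI[of _ 1])
qed

section \<open>The hypergeometric function 2F1(1, b; c; y)\<close>

lemma pochhammer_mono:
  fixes a b :: real
  assumes "0 < a" "a \<le> b"
  shows "pochhammer a n \<le> pochhammer b n"
proof (induction n)
  case (Suc n)
  show ?case unfolding pochhammer_Suc
    by (rule mult_mono) (use Suc assms pochhammer_pos[of a n] in auto)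
qed simp

(* Since (1)_n = n!, the coefficients of 2F1(1, b; c; y) are (b)_n / (c)_n. *)
definition hyp2F1_1_fps :: "real \<Rightarrow> real \<Rightarrow> real fps" where
  "hyp2F1_1_fps b c = Abs_fps (\<lambda>n. pochhammer b n / pochhammer c n)"

lemma hyp2F1_1_eq_eval_fps: "hyp2F1 1 b c = eval_fps (hyp2F1_1_fps b c)"
  by (simp add: fun_eq_iff hyp2F1_def eval_fps_def hyp2F1_1_fps_def pochhammer_fact[symmetric])

context
  fixes b c :: real
  assumes b: "0 < b" and bc: "b \<le> c"
begin

lemma hyp2F1_1_fps_nth_bounds: "0 \<le> fps_nth (hyp2F1_1_fps b c) n" "fps_nth (hyp2F1_1_fps b c) n \<le> 1"
  using pochhammer_pos[of b n] pochhammer_pos[of c n] pochhammer_mono[OF b bc, of n] b bc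
  by (simp_all add: hyp2F1_1_fps_def)

lemma fps_conv_radius_hyp2F1_1: "1 \<le> fps_conv_radius (hyp2F1_1_fps b c)"
  by (rule fps_conv_radius_ge_1) (use hyp2F1_1_fps_nth_bounds in simp)

lemma hyp2F1_1_fps_nth_Suc:
  "(real n + c) * fps_nth (hyp2F1_1_fps b c) (Suc n) = (real n + b) * fps_nth (hyp2F1_1_fps b c) n"
proof -
  have "0 < c + real n" using b bc by simp
  then show ?thesis by (simp add: hyp2F1_1_fps_def pochhammer_Suc add.commute)
qed

lemma norm_less_fps_conv_radius_hyp2F1_1:
  fixes y :: real
  assumes "\<bar>y\<bar> < 1"
  shows "norm y < fps_conv_radius (hyp2F1_1_fps b c)"
proof -
  have "ereal \<bar>y\<bar> < 1" using assms by (simp add: one_ereal_def)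
  from less_le_trans[OF this fps_conv_radius_hyp2F1_1] show ?thesis by simp
qed

lemma hyp2F1_1_sums:
  assumes "\<bar>y\<bar> < 1"
  shows "(\<lambda>n. pochhammer b n / pochhammer c n * y ^ n) sums hyp2F1 1 b c y"
  using sums_eval_fps[OF norm_less_fps_conv_radius_hyp2F1_1[OF assms]]
  by (simp add: hyp2F1_1_eq_eval_fps hyp2F1_1_fps_def)

lemma hyp2F1_1_has_derivative:
  assumes "\<bar>y\<bar> < 1"
  shows "(hyp2F1 1 b c has_real_derivative eval_fps (fps_deriv (hyp2F1_1_fps b c)) y) (at y)"
  unfolding hyp2F1_1_eq_eval_fps
  by (rule has_field_derivative_eval_fps[OF norm_less_fps_conv_radius_hyp2F1_1[OF assms]])

lemma hyp2F1_1_ode: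
  assumes y: "\<bar>y\<bar> < 1"
  defines "F \<equiv> hyp2F1 1 b c y" and "D \<equiv> eval_fps (fps_deriv (hyp2F1_1_fps b c)) y"
  shows "y * (1 - y) * D + (c - 1 - b * y) * F = c - 1"
proof -
  define a where "a = fps_nth (hyp2F1_1_fps b c)"
  note radius = norm_less_fps_conv_radius_hyp2F1_1[OF y]
  have sF: "(\<lambda>n. a n * y ^ n) sums F"
    unfolding a_def F_def hyp2F1_1_eq_eval_fps by (rule sums_eval_fps[OF radius])
  have "(\<lambda>n. real (Suc n) * a (Suc n) * y ^ n) sums D"
    using sums_eval_fps[OF less_le_trans[OF radius fps_conv_radius_deriv]]
    by (simp add: a_def D_def mult_ac)
  from sums_mult[OF this, of y]
  have sD_Suc: "(\<lambda>n. real (Suc n) * a (Suc n) * y ^ Suc n) sums (y * D)" by (simp add: mult_ac)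
  then have sD: "(\<lambda>n. real n * a n * y ^ n) sums (y * D)"
    using sums_Suc_iff[of "\<lambda>n. real n * a n * y ^ n"] by simp
  have "(\<lambda>n. a (Suc n) * y ^ Suc n) sums (F - a 0)"
    using sF sums_Suc_iff[of "\<lambda>n. a n * y ^ n"] by simp
  then have "(\<lambda>n. a (Suc n) * y ^ Suc n) sums (F - 1)" by (simp add: a_def hyp2F1_1_fps_def)
  (* Sum (n + c) a_(n+1) y^(n+1) in two ways, the second using (n + c) a_(n+1) = (n + b) a_n. *)
  from sums_add[OF sD_Suc sums_mult[OF this, of "c - 1"]]
  have "(\<lambda>n. (real n + c) * a (Suc n) * y ^ Suc n) sums (y * D + (c - 1) * (F - 1))"
    by (simp add: algebra_simps)
  moreover from sums_add[OF sums_mult[OF sD, of y] sums_mult[OF sF, of "b * y"]]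
  have "(\<lambda>n. (real n + c) * a (Suc n) * y ^ Suc n) sums (y * (y * D) + b * y * F)"
    using hyp2F1_1_fps_nth_Suc by (simp add: a_def algebra_simps)
  ultimately have "y * D + (c - 1) * (F - 1) = y * (y * D) + b * y * F"
    by (rule sums_unique2)
  then show ?thesis by (simp add: algebra_simps)
qed

lemma hyp2F1_1_ode_div:
  assumes y: "\<bar>y\<bar> < 1"
  defines "F \<equiv> hyp2F1 1 b c y" and "D \<equiv> eval_fps (fps_deriv (hyp2F1_1_fps b c)) y"
  shows "y * D + b * F + (c - 1 - b) * F / (1 - y) = (c - 1) / (1 - y)"
  using hyp2F1_1_ode[OF y] y unfolding F_def[symmetric] D_def[symmetric] by (simp add: field_simps)

end

definition hyp2F1_primitive :: "real \<Rightarrow> real \<Rightarrow> real \<Rightarrow> nat \<Rightarrow> real \<Rightarrow> real" where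
  "hyp2F1_primitive lam g q j t = exp (- (g * lam) * t) / (exp (lam * t) - q) ^ j
     * hyp2F1 1 g (1 + g + real j) (q * exp (- (lam * t))) / (real j + g)"

lemma DERIV_exp_div_power:
  fixes a lam q t :: real
  assumes "exp (lam * t) \<noteq> q"
  shows "((\<lambda>t. exp (- a * t) / (exp (lam * t) - q) ^ j) has_real_derivative
           - (a + real j * lam * exp (lam * t) / (exp (lam * t) - q)) * (exp (- a * t) / (exp (lam * t) - q) ^ j))
         (at t)"
proof -
  define E where "E = exp (lam * t)"
  define P where "P = E - q"
  have P: "P \<noteq> 0" using assms by (simp add: P_def E_def)
  have dP: "((\<lambda>t. exp (lam * t) - q) has_real_derivative lam * E) (at t)"
    unfolding E_def by (auto intro!: derivative_eq_intros)
  have "of_nat j * (lam * E * P ^ (j - Suc 0)) = real j * P ^ j / P * (lam * E)"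
    using P by (cases j) (simp_all add: field_simps)
  with DERIV_power[OF dP, of j]
  have dPj: "((\<lambda>t. (exp (lam * t) - q) ^ j) has_real_derivative real j * P ^ j / P * (lam * E)) (at t)"
    unfolding E_def[symmetric] P_def[symmetric] by simp
  show ?thesis
  proof (rule DERIV_cong[OF DERIV_divide[OF _ dPj]])
    show "((\<lambda>t. exp (- a * t)) has_real_derivative - a * exp (- a * t)) (at t)"
      by (auto intro!: derivative_eq_intros)
    show "(exp (lam * t) - q) ^ j \<noteq> 0" using P by (simp add: E_def P_def)
    show "(- a * exp (- a * t) * (exp (lam * t) - q) ^ j - exp (- a * t) * (real j * P ^ j / P * (lam * E)))
        / ((exp (lam * t) - q) ^ j * (exp (lam * t) - q) ^ j)
      = - (a + real j * lam * exp (lam * t) / (exp (lam * t) - q)) * (exp (- a * t) / (exp (lam * t) - q) ^ j)"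
      using P unfolding E_def[symmetric] P_def[symmetric] by (simp add: field_simps)
  qed
qed

lemma hyp2F1_primitive_deriv:
  assumes lam: "0 < lam" and g: "0 < g" and q: "0 \<le> q" "q < 1" and t: "0 \<le> t"
  shows "(hyp2F1_primitive lam g q j has_real_derivative
           - lam * exp (lam * t) * exp (- (g * lam) * t) / (exp (lam * t) - q) ^ Suc j) (at t)"
proof -
  define E where "E = exp (lam * t)"
  define P where "P = E - q"
  define A where "A = exp (- (g * lam) * t) / P ^ j"
  define y where "y = q * exp (- (lam * t))"
  define F where "F = hyp2F1 1 g (1 + g + real j)"
  define D where "D = eval_fps (fps_deriv (hyp2F1_1_fps g (1 + g + real j))) y"
  have "1 \<le> E" using lam t by (simp add: E_def)
  then have P: "0 < P" using q by (simp add: P_def)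
  have one_minus_y: "1 - y = P / E" by (simp add: P_def y_def E_def exp_minus field_simps)
  have "y \<le> q" unfolding y_def using q lam t by (intro mult_right_le_one_le) auto
  then have y: "\<bar>y\<bar> < 1" using q by (simp add: y_def)
  have key: "y * D + g * F y + real j * F y * E / P = (g + real j) * E / P"
    using hyp2F1_1_ode_div[of g "1 + g + real j" y] g y by (simp add: F_def D_def one_minus_y)
  have dy: "((\<lambda>t. q * exp (- (lam * t))) has_real_derivative - lam * y) (at t)"
    unfolding y_def by (auto intro!: derivative_eq_intros)
  have "(F has_real_derivative D) (at y)"
    using hyp2F1_1_has_derivative[of g "1 + g + real j" y] g y by (simp add: F_def D_def)
  from DERIV_chain2[OF this[unfolded y_def] dy]
  have dF: "((\<lambda>t. F (q * exp (- (lam * t)))) has_real_derivative D * (- lam * y)) (at t)" .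
  have dA: "((\<lambda>t. exp (- (g * lam) * t) / (exp (lam * t) - q) ^ j) has_real_derivative
      - (g * lam + real j * lam * E / P) * A) (at t)"
    using DERIV_exp_div_power[of lam t q "g * lam" j] P by (simp add: A_def E_def P_def)
  have "hyp2F1_primitive lam g q j = (\<lambda>t. exp (- (g * lam) * t) / (exp (lam * t) - q) ^ j
      * F (q * exp (- (lam * t))) / (real j + g))"
    by (simp add: fun_eq_iff hyp2F1_primitive_def F_def)
  then have "(hyp2F1_primitive lam g q j has_real_derivative
      (- (g * lam + real j * lam * E / P) * A * F y + D * (- lam * y) * A) / (real j + g)) (at t)"
    using DERIV_cdivide[OF DERIV_mult[OF dA dF], of "real j + g"] by (simp only: A_def y_def E_def P_def)
  moreover have "- (g * lam + real j * lam * E / P) * A * F y + D * (- lam * y) * A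
      = (real j + g) * (- lam * E * exp (- (g * lam) * t) / P ^ Suc j)"
  proof -
    have "- (g * lam + real j * lam * E / P) * A * F y + D * (- lam * y) * A
        = - lam * A * (y * D + g * F y + real j * F y * E / P)"
      by (simp add: algebra_simps)
    then show ?thesis unfolding key using P by (simp add: A_def field_simps)
  qed
  ultimately show ?thesis using g by (simp add: E_def P_def)
qed

lemma sum_choose_Suc:
  fixes a :: "nat \<Rightarrow> real"
  shows "(\<Sum>i\<le>Suc m. real (Suc m choose i) * a i)
       = (\<Sum>i\<le>m. real (m choose i) * a i) + (\<Sum>i\<le>m. real (m choose i) * a (Suc i))"
proof -
  have "(\<Sum>i\<le>Suc m. real (Suc m choose i) * a i)
      = a 0 + (\<Sum>i\<le>m. real (m choose Suc i) * a (Suc i)) + (\<Sum>i\<le>m. real (m choose i) * a (Suc i))"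
    by (subst sum.atMost_Suc_shift) (simp add: sum.distrib algebra_simps)
  also have "a 0 + (\<Sum>i\<le>m. real (m choose Suc i) * a (Suc i)) = (\<Sum>i\<le>Suc m. real (m choose i) * a i)"
    by (subst sum.atMost_Suc_shift) simp
  also have "\<dots> = (\<Sum>i\<le>m. real (m choose i) * a i)"
    by simp
  finally show ?thesis .
qed

lemma alternating_binomial_sum_inverse_pochhammer:
  fixes x :: real
  assumes "0 < x"
  shows "(\<Sum>i\<le>m. real (m choose i) * ((-1) ^ i / pochhammer (x + real i) (Suc n)))
       = fact (m + n) / (fact n * pochhammer x (Suc (m + n)))"
  using assms
proof (induction m arbitrary: x)
  case (Suc m)
  define K where "K = Suc (m + n)"
  have pos: "0 < pochhammer x K" "0 < pochhammer (x + 1) K" "0 < pochhammer x (Suc K)"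
    using Suc.prems by (auto intro!: pochhammer_pos)
  have "(\<Sum>i\<le>Suc m. real (Suc m choose i) * ((-1) ^ i / pochhammer (x + real i) (Suc n)))
      = (\<Sum>i\<le>m. real (m choose i) * ((-1) ^ i / pochhammer (x + real i) (Suc n)))
        - (\<Sum>i\<le>m. real (m choose i) * ((-1) ^ i / pochhammer (x + 1 + real i) (Suc n)))"
    by (subst sum_choose_Suc) (simp add: sum_negf[symmetric] add_ac)
  also have "\<dots> = fact (m + n) / fact n * (1 / pochhammer x K - 1 / pochhammer (x + 1) K)"
    using Suc.IH[of x] Suc.IH[of "x + 1"] Suc.prems by (simp add: K_def right_diff_distrib)
  also have "1 / pochhammer x K - 1 / pochhammer (x + 1) K = real K / pochhammer x (Suc K)"
  proof -
    have "1 / pochhammer x K = (x + real K) / pochhammer x (Suc K)"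
      using pos Suc.prems by (simp add: pochhammer_Suc)
    moreover have "1 / pochhammer (x + 1) K = x / pochhammer x (Suc K)"
      using pos Suc.prems by (simp add: pochhammer_rec)
    ultimately show ?thesis by (simp add: diff_divide_distrib[symmetric])
  qed
  finally show ?case by (simp add: K_def)
qed simp

lemma pochhammer_binomial_sum:
  fixes g :: real
  assumes g: "0 < g"
  shows "(\<Sum>i\<le>m. real (m choose i) * (-1) ^ i / (real (Suc i) + g)
            * (pochhammer g n / pochhammer (1 + g + real (Suc i)) n))
       = fact m / pochhammer (g + 1) (Suc m)
           * (pochhammer (real (Suc m)) n * pochhammer g n / pochhammer (1 + g + real (Suc m)) n / fact n)"
proof -
  have "pochhammer (g + 1 + real i) (Suc n) = (real (Suc i) + g) * pochhammer (1 + g + real (Suc i)) n"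
    for i by (simp add: pochhammer_rec add_ac)
  then have "(\<Sum>i\<le>m. real (m choose i) * (-1) ^ i / (real (Suc i) + g)
      * (pochhammer g n / pochhammer (1 + g + real (Suc i)) n))
    = pochhammer g n * (\<Sum>i\<le>m. real (m choose i) * ((-1) ^ i / pochhammer (g + 1 + real i) (Suc n)))"
    by (simp add: sum_distrib_left mult_ac)
  also have "\<dots> = pochhammer g n * (fact (m + n) / (fact n * pochhammer (g + 1) (Suc (m + n))))"
    using g by (subst alternating_binomial_sum_inverse_pochhammer) auto
  also have "pochhammer (g + 1) (Suc (m + n))
      = pochhammer (g + 1) (Suc m) * pochhammer (1 + g + real (Suc m)) n"
    using pochhammer_product'[of "g + 1" "Suc m" n] by (simp add: add_ac)
  also have "fact (m + n) = (fact m :: real) * pochhammer (real (Suc m)) n"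
    using pochhammer_product'[of 1 m n] by (simp add: pochhammer_fact add_ac)
  finally show ?thesis by (simp add: field_simps)
qed

lemma hyp2F1_binomial_sum:
  fixes g y :: real
  assumes g: "0 < g" and y: "\<bar>y\<bar> < 1"
  shows "(\<Sum>i\<le>m. real (m choose i) * (-1) ^ i
            * (hyp2F1 1 g (1 + g + real (Suc i)) y / (real (Suc i) + g)))
       = fact m / pochhammer (g + 1) (Suc m) * hyp2F1 (real (Suc m)) g (1 + g + real (Suc m)) y"
proof -
  define c where "c i = real (m choose i) * (-1) ^ i / (real (Suc i) + g)" for i
  define K where "K = fact m / pochhammer (g + 1) (Suc m)"
  define b where "b n = pochhammer (real (Suc m)) n * pochhammer g n
    / pochhammer (1 + g + real (Suc m)) n * y ^ n / fact n" for n
  have K: "0 < K" using g by (simp add: K_def pochhammer_pos)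
  have "(\<lambda>n. \<Sum>i\<le>m. c i * (pochhammer g n / pochhammer (1 + g + real (Suc i)) n * y ^ n))
      sums (\<Sum>i\<le>m. c i * hyp2F1 1 g (1 + g + real (Suc i)) y)"
    using hyp2F1_1_sums[of g _ y] g y by (intro sums_sum sums_mult) auto
  moreover have "(\<Sum>i\<le>m. c i * (pochhammer g n / pochhammer (1 + g + real (Suc i)) n * y ^ n)) = K * b n" for n
  proof -
    have "(\<Sum>i\<le>m. c i * (pochhammer g n / pochhammer (1 + g + real (Suc i)) n * y ^ n))
        = (\<Sum>i\<le>m. c i * (pochhammer g n / pochhammer (1 + g + real (Suc i)) n)) * y ^ n"
      by (simp only: sum_distrib_right mult.assoc)
    also have "\<dots> = K * b n"
      unfolding c_def K_def pochhammer_binomial_sum[OF g] by (simp add: b_def)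
    finally show ?thesis .
  qed
  ultimately have "(\<lambda>n. K * b n) sums (\<Sum>i\<le>m. c i * hyp2F1 1 g (1 + g + real (Suc i)) y)"
    by simp
  from sums_divide[OF this, of K]
  have "b sums ((\<Sum>i\<le>m. c i * hyp2F1 1 g (1 + g + real (Suc i)) y) / K)" using K by simp
  moreover have "hyp2F1 (real (Suc m)) g (1 + g + real (Suc m)) y = suminf b"
    unfolding hyp2F1_def by (rule arg_cong[where f = suminf]) (simp add: fun_eq_iff b_def)
  ultimately have "hyp2F1 (real (Suc m)) g (1 + g + real (Suc m)) y
      = (\<Sum>i\<le>m. c i * hyp2F1 1 g (1 + g + real (Suc i)) y) / K"
    by (simp add: sums_iff)
  then show ?thesis using K by (simp add: K_def[symmetric] c_def mult_ac)
qed

section \<open>Kendall's birth-death law and the clone integrals\<close>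

lemma bd_xi_eta_eq:
  fixes al be t :: real
  assumes ab: "be < al" "0 \<le> be" and t: "0 \<le> t"
  defines "q \<equiv> be / al" and "E \<equiv> exp ((al - be) * t)"
  shows "bd_xi al be t = q * (E - 1) / (E - q)" "bd_eta al be t = (E - 1) / (E - q)"
proof -
  have "al * E - be = al * (E - q)" using ab by (simp add: q_def field_simps)
  then show "bd_xi al be t = q * (E - 1) / (E - q)" "bd_eta al be t = (E - 1) / (E - q)"
    using ab by (simp_all add: bd_xi_def bd_eta_def E_def[symmetric] q_def)
qed

lemma bd_pmf_minus_indicator:
  fixes al be t :: real
  assumes ab: "be < al" "0 \<le> be" and t: "0 \<le> t"
  defines "q \<equiv> be / al" and "E \<equiv> exp ((al - be) * t)"
  shows "bd_pmf al be t n - of_bool (n = 0) = (if n = 0 then - ((1 - q) * E / (E - q))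
           else (1 - q) ^ 2 * E * (E - 1) ^ (n - 1) / (E - q) ^ (n + 1))"
proof -
  have "1 \<le> E" "q < 1" using ab t by (simp_all add: E_def q_def)
  then have P: "0 < E - q" by simp
  show ?thesis
    using P unfolding bd_pmf_def bd_xi_eta_eq[OF ab t, folded q_def E_def]
    by (cases n) (simp_all add: field_simps power2_eq_square)
qed

lemma bd_pmf_bounds:
  fixes al be t :: real
  assumes ab: "be < al" "0 \<le> be" and t: "0 \<le> t"
  shows "0 \<le> bd_pmf al be t n" "bd_pmf al be t n \<le> 1"
proof -
  define q where "q = be / al"
  define E where "E = exp ((al - be) * t)"
  have E: "1 \<le> E" and q: "0 \<le> q" "q < 1" using ab t by (simp_all add: E_def q_def)
  have xi: "0 \<le> bd_xi al be t" "bd_xi al be t \<le> 1"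
    and eta: "0 \<le> bd_eta al be t" "bd_eta al be t \<le> 1"
    using E q mult_right_mono[OF E q(1)]
    by (auto simp: bd_xi_eta_eq[OF ab t, folded q_def E_def] divide_le_eq_1 algebra_simps)
  show "0 \<le> bd_pmf al be t n" "bd_pmf al be t n \<le> 1"
    using xi eta by (auto simp: bd_pmf_def intro!: mult_le_one power_le_one)
qed

lemma binomial_sum_inverse_powers:
  fixes a b P :: real
  assumes "P \<noteq> 0"
  shows "(\<Sum>j=1..Suc m. real (m choose (j - 1)) * a ^ j * (b / P ^ Suc j)) = a * b * (P + a) ^ m / P ^ (m + 2)"
proof -
  have "(\<Sum>j=1..Suc m. real (m choose (j - 1)) * a ^ j * (b / P ^ Suc j))
      = (\<Sum>i\<le>m. real (m choose i) * a ^ Suc i * (b / P ^ Suc (Suc i)))"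
    using sum.shift_bounds_cl_Suc_ivl[of "\<lambda>j. real (m choose (j - 1)) * a ^ j * (b / P ^ Suc j)" 0 m]
    by (simp add: atLeast0AtMost)
  also have "\<dots> = (\<Sum>i\<le>m. a * b / P ^ 2 * (real (m choose i) * (a / P) ^ i * 1 ^ (m - i)))"
    using assms by (intro sum.cong) (simp_all add: field_simps power2_eq_square)
  also have "\<dots> = a * b / P ^ 2 * (a / P + 1) ^ m"
    by (simp add: binomial_ring sum_distrib_left)
  also have "\<dots> = a * b * (P + a) ^ m / P ^ (m + 2)"
    using assms by (simp add: field_simps power_add power2_eq_square)
  finally show ?thesis .
qed

(* The weights come from expanding (E - 1)^(n-1) = ((E - q) + (q - 1))^(n-1), E = e^(lam t). *)
definition clone_primitive :: "real \<Rightarrow> real \<Rightarrow> real \<Rightarrow> nat \<Rightarrow> real \<Rightarrow> real" where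
  "clone_primitive lam g q n t =
     (if n = 0 then hyp2F1_primitive lam g q 0 t
      else (\<Sum>j=1..n. real ((n - 1) choose (j - 1)) * (q - 1) ^ j * hyp2F1_primitive lam g q j t))"

lemma clone_primitive_Suc_deriv:
  assumes lam: "0 < lam" and g: "0 < g" and q: "0 \<le> q" "q < 1" and t: "0 \<le> t"
  shows "(clone_primitive lam g q (Suc m) has_real_derivative
           lam * (1 - q) * exp (lam * t) * exp (- (g * lam) * t) * (exp (lam * t) - 1) ^ m
             / (exp (lam * t) - q) ^ (m + 2)) (at t)"
proof -
  define E where "E = exp (lam * t)"
  define eg where "eg = exp (- (g * lam) * t)"
  have "1 \<le> E" using lam t by (simp add: E_def)
  then have P: "E - q \<noteq> 0" using q by simp
  have "clone_primitive lam g q (Suc m)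
      = (\<lambda>t. \<Sum>j=1..Suc m. real (m choose (j - 1)) * (q - 1) ^ j * hyp2F1_primitive lam g q j t)"
    by (simp add: fun_eq_iff clone_primitive_def)
  moreover have "((\<lambda>t. \<Sum>j=1..Suc m. real (m choose (j - 1)) * (q - 1) ^ j * hyp2F1_primitive lam g q j t)
      has_real_derivative
        (\<Sum>j=1..Suc m. real (m choose (j - 1)) * (q - 1) ^ j * (- lam * E * eg / (E - q) ^ Suc j))) (at t)"
    unfolding E_def eg_def by (intro DERIV_sum DERIV_cmult hyp2F1_primitive_deriv lam g q t)
  moreover have "(\<Sum>j=1..Suc m. real (m choose (j - 1)) * (q - 1) ^ j * (- lam * E * eg / (E - q) ^ Suc j))
      = lam * (1 - q) * E * eg * (E - 1) ^ m / (E - q) ^ (m + 2)"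
    unfolding binomial_sum_inverse_powers[OF P] by (simp add: algebra_simps)
  ultimately show ?thesis by (simp add: E_def eg_def)
qed

lemma clone_primitive_deriv:
  fixes al be g t :: real
  assumes ab: "be < al" "0 \<le> be" and g: "0 < g" and t: "0 \<le> t"
  shows "(clone_primitive (al - be) g (be / al) n has_real_derivative
           al * exp (- (g * (al - be)) * t) * (bd_pmf al be t n - of_bool (n = 0))) (at t)"
proof -
  define lam where "lam = al - be"
  define q where "q = be / al"
  have lam: "0 < lam" using ab by (simp add: lam_def)
  have q: "0 \<le> q" "q < 1" using ab by (simp_all add: q_def)
  have lam_q: "lam = al * (1 - q)" using ab by (simp add: lam_def q_def field_simps)
  note bd = bd_pmf_minus_indicator[OF ab t, folded q_def lam_def]
  show ?thesis
    unfolding lam_def[symmetric] q_def[symmetric]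
  proof (cases n)
    case 0
    have "clone_primitive lam g q 0 = hyp2F1_primitive lam g q 0"
      by (simp add: fun_eq_iff clone_primitive_def)
    with 0 hyp2F1_primitive_deriv[OF lam g q t, of 0] show
      "(clone_primitive lam g q n has_real_derivative
         al * exp (- (g * lam) * t) * (bd_pmf al be t n - of_bool (n = 0))) (at t)"
      unfolding bd by (simp add: lam_q mult_ac)
  next
    case (Suc m)
    with clone_primitive_Suc_deriv[OF lam g q t, of m] show
      "(clone_primitive lam g q n has_real_derivative
         al * exp (- (g * lam) * t) * (bd_pmf al be t n - of_bool (n = 0))) (at t)"
      unfolding bd by (simp add: lam_q power2_eq_square mult_ac)
  qed
qed

lemma has_integral_reflect_deriv:
  fixes H H' :: "real \<Rightarrow> real"
  assumes T: "0 \<le> T" and deriv: "\<And>t. 0 \<le> t \<Longrightarrow> t \<le> T \<Longrightarrow> (H has_real_derivative H' t) (at t)"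
  shows "((\<lambda>s. H' (T - s)) has_integral H T - H 0) {0..T}"
proof -
  have "((\<lambda>s. H' (T - s)) has_integral (- H (T - T)) - (- H (T - 0))) {0..T}"
  proof (rule fundamental_theorem_of_calculus[OF T])
    fix s assume s: "s \<in> {0..T}"
    have "((\<lambda>s. T - s) has_real_derivative -1) (at s)"
      by (auto intro!: derivative_eq_intros)
    from DERIV_chain2[OF deriv this] s
    have "((\<lambda>s. - H (T - s)) has_real_derivative H' (T - s)) (at s)"
      using DERIV_minus by fastforce
    then show "((\<lambda>s. - H (T - s)) has_vector_derivative H' (T - s)) (at s within {0..T})"
      by (simp add: has_real_derivative_iff_has_vector_derivative[symmetric] has_field_derivative_at_within)
  qed
  then show ?thesis by simp
qed

lemma mut_mass_eq:
  assumes "0 < \<delta>" "0 \<le> T"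
  shows "mut_mass \<delta> \<nu> T = \<nu> * (exp (\<delta> * T) - 1) / \<delta>"
proof -
  have "((\<lambda>s. \<nu> * exp (\<delta> * s)) has_integral \<nu> * exp (\<delta> * T) / \<delta> - \<nu> * exp (\<delta> * 0) / \<delta>) {0..T}"
  proof (rule fundamental_theorem_of_calculus[OF assms(2)])
    fix s :: real
    have "((\<lambda>s. \<nu> * exp (\<delta> * s) / \<delta>) has_real_derivative \<nu> * exp (\<delta> * s)) (at s)"
      using assms by (auto intro!: derivative_eq_intros)
    then show "((\<lambda>s. \<nu> * exp (\<delta> * s) / \<delta>) has_vector_derivative \<nu> * exp (\<delta> * s)) (at s within {0..T})"
      by (simp add: has_real_derivative_iff_has_vector_derivative[symmetric] has_field_derivative_at_within)
  qed
  from integral_unique[OF this] show ?thesis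
    unfolding mut_mass_def by (simp add: diff_divide_distrib right_diff_distrib)
qed

lemma clone_integral:
  fixes \<delta> \<nu> \<alpha> \<beta> T :: real and n :: nat
  assumes \<delta>: "0 < \<delta>" and ab: "\<beta> < \<alpha>" "0 \<le> \<beta>" and T: "0 \<le> T"
  defines "H \<equiv> clone_primitive (\<alpha> - \<beta>) (\<delta> / (\<alpha> - \<beta>)) (\<beta> / \<alpha>) n"
  shows "((\<lambda>s. \<nu> * exp (\<delta> * s) * (bd_pmf \<alpha> \<beta> (T - s) n - of_bool (n = 0))) has_integral
           \<nu> / \<alpha> * exp (\<delta> * T) * (H T - H 0)) {0..T}"
proof -
  have g: "0 < \<delta> / (\<alpha> - \<beta>)" and g_lam: "\<delta> / (\<alpha> - \<beta>) * (\<alpha> - \<beta>) = \<delta>"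
    using \<delta> ab by simp_all
  define H' where "H' t = \<alpha> * exp (- \<delta> * t) * (bd_pmf \<alpha> \<beta> t n - of_bool (n = 0))" for t
  have "(H has_real_derivative H' t) (at t)" if "0 \<le> t" for t
    using clone_primitive_deriv[OF ab g that, of n] unfolding H_def H'_def g_lam .
  with T have "((\<lambda>s. H' (T - s)) has_integral H T - H 0) {0..T}"
    by (intro has_integral_reflect_deriv)
  from has_integral_mult_right[OF this, of "\<nu> / \<alpha> * exp (\<delta> * T)"]
  show ?thesis
  proof (rule has_integral_eq[rotated])
    fix s
    have "exp (\<delta> * T) * exp (- \<delta> * (T - s)) = exp (\<delta> * s)"
      by (simp add: exp_add[symmetric] algebra_simps)
    then show "\<nu> / \<alpha> * exp (\<delta> * T) * H' (T - s) = \<nu> * exp (\<delta> * s) * (bd_pmf \<alpha> \<beta> (T - s) n - of_bool (n = 0))"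
      using ab by (simp add: H'_def field_simps)
  qed
qed

lemma clone_pmf_via_integral:
  fixes \<delta> \<nu> \<alpha> \<beta> T I :: real
  assumes \<nu>: "0 < \<nu>" and ab: "\<beta> < \<alpha>" "0 \<le> \<beta>" and M: "0 < mut_mass \<delta> \<nu> T"
    and I: "((\<lambda>s. \<nu> * exp (\<delta> * s) * (bd_pmf \<alpha> \<beta> (T - s) n - of_bool (n = 0))) has_integral I) {0..T}"
  shows "I = mut_mass \<delta> \<nu> T * (clone_pmf \<delta> \<nu> \<alpha> \<beta> T n - of_bool (n = 0))"
    and "0 \<le> clone_pmf \<delta> \<nu> \<alpha> \<beta> T n" and "clone_pmf \<delta> \<nu> \<alpha> \<beta> T n \<le> 1"
proof -
  define M where "M = mut_mass \<delta> \<nu> T"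
  have mass: "((\<lambda>s. \<nu> * exp (\<delta> * s)) has_integral M) {0..T}"
    unfolding M_def mut_mass_def by (intro integrable_integral integrable_continuous_interval continuous_intros)
  from has_integral_add[OF I has_integral_mult_left[OF mass, of "of_bool (n = 0)"]]
  have int: "((\<lambda>s. \<nu> * exp (\<delta> * s) * bd_pmf \<alpha> \<beta> (T - s) n) has_integral I + M * of_bool (n = 0)) {0..T}"
    by (simp add: algebra_simps)
  then have c: "clone_pmf \<delta> \<nu> \<alpha> \<beta> T n = (I + M * of_bool (n = 0)) / M"
    by (simp add: clone_pmf_def M_def[symmetric] integral_unique)
  then show "I = mut_mass \<delta> \<nu> T * (clone_pmf \<delta> \<nu> \<alpha> \<beta> T n - of_bool (n = 0))"
    using M by (simp add: M_def[symmetric] field_simps)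
  have bd: "0 \<le> \<nu> * exp (\<delta> * s) * bd_pmf \<alpha> \<beta> (T - s) n"
    "\<nu> * exp (\<delta> * s) * bd_pmf \<alpha> \<beta> (T - s) n \<le> \<nu> * exp (\<delta> * s)" if "s \<in> {0..T}" for s
    using bd_pmf_bounds[OF ab, of "T - s" n] \<nu> that by (simp_all add: mult_left_le)
  show "0 \<le> clone_pmf \<delta> \<nu> \<alpha> \<beta> T n"
    using has_integral_nonneg[OF int bd(1)] M unfolding c M_def by simp
  show "clone_pmf \<delta> \<nu> \<alpha> \<beta> T n \<le> 1"
    using has_integral_le[OF int mass bd(2)] M unfolding c M_def by simp
qed

definition log_pgf_coeff :: "real \<Rightarrow> real \<Rightarrow> real \<Rightarrow> real \<Rightarrow> nat \<Rightarrow> real" where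
  "log_pgf_coeff N \<mu> \<gamma> q k =
     (if k = 0 then
       N * \<mu> / \<gamma> * (1 / N * hyp2F1 1 \<gamma> (1 + \<gamma>) (N powr (-1/\<gamma>) * q)
                      - hyp2F1 1 \<gamma> (1 + \<gamma>) q)
     else
       \<mu> * (\<Sum>j=1..k. real ((k - 1) choose (j - 1)) * (1 / (real j + \<gamma>))
               * ((1 - q) / (q - N powr (1/\<gamma>))) ^ j
               * hyp2F1 1 \<gamma> (1 + \<gamma> + real j) (N powr (-1/\<gamma>) * q))
       + N * \<mu> * (fact (k - 1) / pochhammer (\<gamma> + 1) k)
           * hyp2F1 (real k) \<gamma> (1 + \<gamma> + real k) q)"

lemma hyp2F1_primitive_at:
  fixes lam g q N T :: real
  assumes g: "0 < g" and N: "0 < N" and T: "exp (g * lam * T) = N"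
  shows "N * hyp2F1_primitive lam g q j T
    = hyp2F1 1 g (1 + g + real j) (N powr (- 1 / g) * q) / (N powr (1 / g) - q) ^ j / (real j + g)"
proof -
  have "lam * T = ln N / g" using T g by (auto simp: field_simps)
  then have "exp (- (g * lam) * T) = 1 / N" "exp (lam * T) = N powr (1 / g)"
    "exp (- (lam * T)) = N powr (- 1 / g)"
    using T N by (simp_all add: exp_minus powr_def field_simps)
  then show ?thesis
    unfolding hyp2F1_primitive_def using N by (simp add: mult.commute)
qed

lemma clone_primitive_Suc_at:
  fixes lam g q N T :: real
  assumes g: "0 < g" and N: "0 < N" and T: "exp (g * lam * T) = N"
  shows "N * clone_primitive lam g q (Suc m) T
    = (\<Sum>j=1..Suc m. real (m choose (j - 1)) * (1 / (real j + g)) * ((1 - q) / (q - N powr (1 / g))) ^ j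
         * hyp2F1 1 g (1 + g + real j) (N powr (- 1 / g) * q))"
proof -
  have "(q - 1) / (N powr (1 / g) - q) = (1 - q) / (q - N powr (1 / g))"
    using minus_divide_divide[of "q - 1" "N powr (1 / g) - q"] by simp
  then have pw: "(q - 1) ^ j / (N powr (1 / g) - q) ^ j = ((1 - q) / (q - N powr (1 / g))) ^ j" for j
    unfolding power_divide[symmetric] by simp
  have "N * clone_primitive lam g q (Suc m) T
      = (\<Sum>j=1..Suc m. real (m choose (j - 1)) * (q - 1) ^ j * (N * hyp2F1_primitive lam g q j T))"
    by (simp add: clone_primitive_def sum_distrib_left mult_ac del: sum.cl_ivl_Suc)
  also have "\<dots> = (\<Sum>j=1..Suc m. real (m choose (j - 1)) * (1 / (real j + g))
      * ((q - 1) ^ j / (N powr (1 / g) - q) ^ j) * hyp2F1 1 g (1 + g + real j) (N powr (- 1 / g) * q))"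
    unfolding hyp2F1_primitive_at[OF g N T] by (simp add: mult_ac del: sum.cl_ivl_Suc)
  finally show ?thesis unfolding pw .
qed

lemma clone_primitive_Suc_at_0:
  fixes g q :: real
  assumes g: "0 < g" and q: "0 \<le> q" "q < 1"
  shows "clone_primitive lam g q (Suc m) 0
    = - (fact m / pochhammer (g + 1) (Suc m) * hyp2F1 (real (Suc m)) g (1 + g + real (Suc m)) q)"
proof -
  have "(q - 1) ^ j * hyp2F1_primitive lam g q j 0 = (-1) ^ j * (hyp2F1 1 g (1 + g + real j) q / (real j + g))"
    for j
  proof -
    have "(q - 1) ^ j = (-1) ^ j * (1 - q) ^ j" by (simp flip: power_mult_distrib)
    moreover have "(1 - q) ^ j \<noteq> 0" using q by simp
    ultimately show ?thesis using q by (simp add: hyp2F1_primitive_def)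
  qed
  then have "clone_primitive lam g q (Suc m) 0
      = (\<Sum>j=1..Suc m. real (m choose (j - 1)) * (-1) ^ j * (hyp2F1 1 g (1 + g + real j) q / (real j + g)))"
    by (simp add: clone_primitive_def mult.assoc)
  also have "\<dots> = - (\<Sum>i\<le>m. real (m choose i) * (-1) ^ i
      * (hyp2F1 1 g (1 + g + real (Suc i)) q / (real (Suc i) + g)))"
    using sum.shift_bounds_cl_Suc_ivl[of "\<lambda>j. real (m choose (j - 1)) * (-1) ^ j
      * (hyp2F1 1 g (1 + g + real j) q / (real j + g))" 0 m]
    by (simp add: atLeast0AtMost sum_negf[symmetric])
  also have "\<dots> = - (fact m / pochhammer (g + 1) (Suc m) * hyp2F1 (real (Suc m)) g (1 + g + real (Suc m)) q)"
    using g q by (subst hyp2F1_binomial_sum) auto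
  finally show ?thesis .
qed

lemma clone_primitive_increment:
  fixes lam g q N T :: real
  assumes g: "0 < g" and q: "0 \<le> q" "q < 1" and N: "0 < N" and T: "exp (g * lam * T) = N"
  shows "N * \<mu> * (clone_primitive lam g q n T - clone_primitive lam g q n 0) = log_pgf_coeff N \<mu> g q n"
proof (cases n)
  case 0
  have "N * \<mu> * (clone_primitive lam g q n T - clone_primitive lam g q n 0)
      = \<mu> * (N * hyp2F1_primitive lam g q 0 T) - N * \<mu> * hyp2F1_primitive lam g q 0 0"
    by (simp add: 0 clone_primitive_def algebra_simps)
  also have "\<dots> = \<mu> * (hyp2F1 1 g (1 + g) (N powr (- 1 / g) * q) / g) - N * \<mu> * (hyp2F1 1 g (1 + g) q / g)"
    unfolding hyp2F1_primitive_at[OF g N T] by (simp add: hyp2F1_primitive_def)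
  also have "\<dots> = log_pgf_coeff N \<mu> g q n"
    using N g by (simp add: 0 log_pgf_coeff_def field_simps)
  finally show ?thesis .
next
  case (Suc m)
  have "N * \<mu> * (clone_primitive lam g q n T - clone_primitive lam g q n 0)
      = \<mu> * (N * clone_primitive lam g q (Suc m) T) - N * \<mu> * clone_primitive lam g q (Suc m) 0"
    by (simp add: Suc algebra_simps)
  then show ?thesis
    unfolding clone_primitive_Suc_at[OF g N T] clone_primitive_Suc_at_0[OF g q]
    by (simp add: Suc log_pgf_coeff_def del: sum.cl_ivl_Suc)
qed

lemma clone_integral_log_pgf_coeff:
  fixes \<delta> \<nu> \<alpha> \<beta> N :: real
  assumes \<delta>: "0 < \<delta>" and ab: "\<beta> < \<alpha>" "0 \<le> \<beta>" and N: "1 \<le> N"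
  shows "((\<lambda>s. \<nu> * exp (\<delta> * s) * (bd_pmf \<alpha> \<beta> (ln N / \<delta> - s) n - of_bool (n = 0))) has_integral
           log_pgf_coeff N (\<nu> / \<alpha>) (\<delta> / (\<alpha> - \<beta>)) (\<beta> / \<alpha>) n) {0..ln N / \<delta>}"
proof -
  define g where "g = \<delta> / (\<alpha> - \<beta>)"
  have g: "0 < g" and q: "0 \<le> \<beta> / \<alpha>" "\<beta> / \<alpha> < 1" using \<delta> ab by (simp_all add: g_def)
  have T: "0 \<le> ln N / \<delta>" and "exp (\<delta> * (ln N / \<delta>)) = N" using \<delta> N by simp_all
  moreover have "g * (\<alpha> - \<beta>) = \<delta>" using \<delta> ab by (simp add: g_def)
  ultimately show ?thesis
    using clone_integral[OF \<delta> ab T, of \<nu> n] clone_primitive_increment[OF g q, of N "\<alpha> - \<beta>" "ln N / \<delta>" "\<nu> / \<alpha>" n] N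
    by (simp add: g_def mult_ac)
qed

theorem mainTheorem4:
  fixes \<delta> \<nu> \<alpha> \<beta> N :: real
  assumes "\<delta> > 0" and "\<nu> > 0" and "\<alpha> > \<beta>" and "\<beta> \<ge> 0" and "N > 1"
  defines "lam \<equiv> \<alpha> - \<beta>"
  defines "q \<equiv> \<beta> / \<alpha>"
  defines "\<gamma> \<equiv> \<delta> / lam"
  defines "\<mu> \<equiv> \<nu> / \<alpha>"
  defines "\<tau> \<equiv> ln N / \<delta>"
  defines "p \<equiv> B_pmf \<delta> \<nu> \<alpha> \<beta> \<tau>"
  defines "qc \<equiv> (\<lambda>k::nat.
     if k = 0 then
       N * \<mu> / \<gamma> * (1 / N * hyp2F1 1 \<gamma> (1 + \<gamma>) (N powr (-1/\<gamma>) * q)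
                      - hyp2F1 1 \<gamma> (1 + \<gamma>) q)
     else
       \<mu> * (\<Sum>j=1..k. real ((k - 1) choose (j - 1)) * (1 / (real j + \<gamma>))
               * ((1 - q) / (q - N powr (1/\<gamma>))) ^ j
               * hyp2F1 1 \<gamma> (1 + \<gamma> + real j) (N powr (-1/\<gamma>) * q))
       + N * \<mu> * (fact (k - 1) / pochhammer (\<gamma> + 1) k)
           * hyp2F1 (real k) \<gamma> (1 + \<gamma> + real k) q)"
  shows "(\<exists>r>0. \<forall>z::real. \<bar>z\<bar> < r \<longrightarrow>
            (\<lambda>k. qc k * z ^ k) sums ln (\<Sum>n. p n * z ^ n))
         \<and> p 0 = exp (qc 0)
         \<and> (\<forall>n\<ge>1. p n = 1 / real n * (\<Sum>k<n. real (n - k) * qc (n - k) * p k))"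
proof -
  have \<tau>: "0 \<le> \<tau>" "exp (\<delta> * \<tau>) = N" using assms(1,5) by (simp_all add: \<tau>_def)
  define M where "M = mut_mass \<delta> \<nu> \<tau>"
  have M: "0 < M" unfolding M_def mut_mass_eq[OF assms(1) \<tau>(1)] \<tau>(2) using assms(1,2,5) by simp
  have "qc = log_pgf_coeff N \<mu> \<gamma> q"
    by (simp add: qc_def log_pgf_coeff_def fun_eq_iff)
  then have "((\<lambda>s. \<nu> * exp (\<delta> * s) * (bd_pmf \<alpha> \<beta> (\<tau> - s) n - of_bool (n = 0))) has_integral qc n) {0..\<tau>}"
    for n
    using clone_integral_log_pgf_coeff[OF assms(1,3,4), of N \<nu> n] assms(5)
    by (simp add: \<tau>_def \<mu>_def \<gamma>_def lam_def q_def)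
  note c = clone_pmf_via_integral[OF assms(2,3,4) M[unfolded M_def] this, folded M_def]
  from compound_poisson_log_pgf[OF less_imp_le[OF M] c(2,3) c(1)] show ?thesis
    by (simp add: p_def M_def B_pmf_eq_compound_poisson)
qed

end
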